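(* Let $X,\partial X$ be Banach spaces, $A_m:D(A_m)\subseteq X\to X$ closed and densely defined, and $L,\Phi\in\mathcal{L}([D(A_m)],\partial X)$ surjective, such that $A:=A_m|_{\ker L}$ generates a $C_0$-semigroup on $X$. Suppose that $G:=A_m|_{\ker\Phi}$ generates a $C_0$-semigroup on $X$, where $\Phi=\Phi_0+V L$ for some $\Phi_0\in\mathcal{L}([D(A_m)],\partial X)$ and some non-invertible $V\in\mathcal{L}(\partial X)$. If $\dim\partial X<\infty$, then \[ \lim_{\lambda\to+\infty}\|L\|_\lambda\cdot\|\Phi_0L_\lambda\|=+\infty. \]
   Context: $[D(A_m)]$ denotes $D(A_m)$ with the graph norm $\|f\|+\|A_mf\|$. For $\lambda\in\rho(A)$, the restriction $L|_{\ker(\lambda-A_m)}:\ker(\lambda-A_m)\to\partial X$ is invertible, and $L_\lambda:=(L|_{\ker(\lambda-A_m)})^{-1}\in\mathcal{L}(\partial X,X)$ (the abstract Dirichlet operator); $\Phi_0L_\lambda\in\mathcal{L}(\partial X)$. Further $\|L\|_\lambda$ denotes the norm of $L$ as an operator from $(\ker(\lambda-A_m),\|\cdot\|_X)$ to $\partial X$ (finite for $\lambda\in\rho(A)$). *)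

theory Defs
  imports "HOL-Analysis.Analysis"
begin

text \<open>Unbounded operators are given by a domain D and a map Am (values outside D irrelevant).
  Spaces are real Banach spaces.\<close>

definition closed_dd_operator :: "'a::banach set \<Rightarrow> ('a \<Rightarrow> 'a) \<Rightarrow> bool" where
  "closed_dd_operator D Am \<longleftrightarrow>
     subspace D \<and> (\<forall>x\<in>D. \<forall>y\<in>D. \<forall>c. Am (x + y) = Am x + Am y \<and> Am (c *\<^sub>R x) = c *\<^sub>R Am x)
     \<and> closed {(x, Am x) | x. x \<in> D} \<and> closure D = UNIV"

text \<open>Bounded linear operators from D with the graph norm of Am into a normed space.\<close>
definition graph_bounded :: "'a::real_normed_vector set \<Rightarrow> ('a \<Rightarrow> 'a) \<Rightarrow> ('a \<Rightarrow> 'b::real_normed_vector) \<Rightarrow> bool" where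
  "graph_bounded D Am L \<longleftrightarrow>
     (\<forall>x\<in>D. \<forall>y\<in>D. \<forall>c. L (x + y) = L x + L y \<and> L (c *\<^sub>R x) = c *\<^sub>R L x)
     \<and> (\<exists>C. \<forall>x\<in>D. norm (L x) \<le> C * (norm x + norm (Am x)))"

definition C0_semigroup :: "(real \<Rightarrow> 'a::banach \<Rightarrow> 'a) \<Rightarrow> bool" where
  "C0_semigroup T \<longleftrightarrow>
     (\<forall>t\<ge>0. bounded_linear (T t)) \<and> T 0 = id
     \<and> (\<forall>s\<ge>0. \<forall>t\<ge>0. T (s + t) = T s \<circ> T t)
     \<and> (\<forall>x. ((\<lambda>t. T t x) \<longlongrightarrow> x) (at_right 0))"

definition generates :: "'a::banach set \<Rightarrow> ('a \<Rightarrow> 'a) \<Rightarrow> bool" where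
  "generates D B \<longleftrightarrow> (\<exists>T. C0_semigroup T
     \<and> D = {x. \<exists>y. ((\<lambda>h. (1 / h) *\<^sub>R (T h x - x)) \<longlongrightarrow> y) (at_right 0)}
     \<and> (\<forall>x\<in>D. ((\<lambda>h. (1 / h) *\<^sub>R (T h x - x)) \<longlongrightarrow> B x) (at_right 0)))"

definition resolvent_set :: "'a::banach set \<Rightarrow> ('a \<Rightarrow> 'a) \<Rightarrow> real set" where
  "resolvent_set D B = {lam. \<exists>R. bounded_linear R \<and> (\<forall>y. R y \<in> D \<and> lam *\<^sub>R R y - B (R y) = y)
       \<and> (\<forall>x\<in>D. R (lam *\<^sub>R x - B x) = x)}"

text \<open>Abstract Dirichlet operator L_lambda: inverse of L restricted to ker(lambda - Am).\<close>
definition dirichlet_op :: "'a set \<Rightarrow> ('a \<Rightarrow> 'a::real_vector) \<Rightarrow> ('a \<Rightarrow> 'b) \<Rightarrow> real \<Rightarrow> 'b \<Rightarrow> 'a" where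
  "dirichlet_op D Am L lam y = (THE x. x \<in> D \<and> Am x = lam *\<^sub>R x \<and> L x = y)"

definition norm_L_lambda :: "'a set \<Rightarrow> ('a \<Rightarrow> 'a::real_normed_vector) \<Rightarrow> ('a \<Rightarrow> 'b::real_normed_vector) \<Rightarrow> real \<Rightarrow> real" where
  "norm_L_lambda D Am L lam = Sup ((\<lambda>x. norm (L x) / norm x) ` {x \<in> D. Am x = lam *\<^sub>R x})"

end

theory Submission
  imports Defs "HOL-Real_Asymp.Real_Asymp"
begin

text \<open>
  For large \<open>\<lambda>\<close> both \<open>A\<close> and \<open>G\<close> have resolvents, obtained as Laplace transforms of their
  semigroups, and \<open>\<lambda> R(\<lambda>, G) x \<rightarrow> x\<close>. Since \<open>\<partial>X\<close> is finite-dimensional, the non-invertible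
  \<open>V\<close> is not surjective and has closed range, so some \<open>z\<close> has positive distance \<open>\<delta>\<close> from
  \<open>range V\<close>. Write \<open>z = \<Phi> w\<close>; then \<open>u\<^sub>\<lambda> = w - R(\<lambda>, G) (\<lambda> w - A\<^sub>m w)\<close> lies in
  \<open>ker (\<lambda> - A\<^sub>m)\<close>, satisfies \<open>\<Phi> u\<^sub>\<lambda> = z\<close> and tends to \<open>0\<close>. As
  \<open>\<Phi> u\<^sub>\<lambda> - V L u\<^sub>\<lambda> = \<Phi>\<^sub>0 L\<^sub>\<lambda> L u\<^sub>\<lambda>\<close>, we get
  \<open>\<delta> \<le> \<parallel>L\<parallel>\<^sub>\<lambda> \<parallel>\<Phi>\<^sub>0 L\<^sub>\<lambda>\<parallel> \<parallel>u\<^sub>\<lambda>\<parallel>\<close>, which forces the product to diverge.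
\<close>

section \<open>Finite-dimensional normed spaces\<close>

lemma infdist_span_bound:
  fixes v :: "'b::real_normed_vector"
  assumes "x - c *\<^sub>R v \<in> span S"
  shows "\<bar>c\<bar> * infdist v (span S) \<le> norm x"
proof (cases "c = 0")
  case False
  have "- (1 / c) *\<^sub>R (x - c *\<^sub>R v) \<in> span S"
    using assms span_scale by blast
  moreover have "dist v (- (1 / c) *\<^sub>R (x - c *\<^sub>R v)) = norm x / \<bar>c\<bar>"
    using False by (simp add: dist_norm algebra_simps)
  ultimately have "infdist v (span S) \<le> norm x / \<bar>c\<bar>"
    by (metis infdist_le)
  then show ?thesis
    using False by (simp add: field_simps)
qed simp

lemma Cauchy_if_dist_dominated:
  fixes c :: "nat \<Rightarrow> 'a::metric_space" and x :: "nat \<Rightarrow> 'b::metric_space"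
  assumes "Cauchy x" "d > 0" "\<And>m n. d * dist (c m) (c n) \<le> dist (x m) (x n)"
  shows "Cauchy c"
proof (rule metric_CauchyI)
  fix e :: real
  assume "e > 0"
  then obtain M where "\<And>m n. m \<ge> M \<Longrightarrow> n \<ge> M \<Longrightarrow> dist (x m) (x n) < d * e"
    using metric_CauchyD[OF assms(1), of "d * e"] assms(2) by auto
  then have "d * dist (c m) (c n) < d * e" if "m \<ge> M" "n \<ge> M" for m n
    using assms(3)[of m n] that by fastforce
  then show "\<exists>M. \<forall>m\<ge>M. \<forall>n\<ge>M. dist (c m) (c n) < e"
    using assms(2) by auto
qed

lemma closed_span_finite:
  fixes S :: "'b::real_normed_vector set"
  assumes "finite S"
  shows "closed (span S)"
  using assms
proof (induction S rule: finite_induct)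
  case (insert v S)
  show ?case
  proof (cases "v \<in> span S")
    case True
    then show ?thesis
      using insert.IH by (simp add: span_redundant)
  next
    case False
    define d where "d = infdist v (span S)"
    have d: "d > 0"
      unfolding d_def using insert.IH False by (intro infdist_pos_not_in_closed) (use span_zero in auto)
    show ?thesis
      unfolding closed_sequential_limits
    proof (intro allI impI, elim conjE)
      fix x l
      assume x: "\<forall>n. x n \<in> span (insert v S)" and "x \<longlonglongrightarrow> l"
      have "\<forall>n. \<exists>c. x n - c *\<^sub>R v \<in> span S"
        using x span_insert by blast
      then obtain c where c: "\<And>n. x n - c n *\<^sub>R v \<in> span S"
        by metis
      have cd: "\<bar>c m - c n\<bar> * d \<le> norm (x m - x n)" for m n
        unfolding d_def
      proof (rule infdist_span_bound)
        have "(x m - x n) - (c m - c n) *\<^sub>R v = (x m - c m *\<^sub>R v) - (x n - c n *\<^sub>R v)"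
          by (simp add: algebra_simps)
        then show "(x m - x n) - (c m - c n) *\<^sub>R v \<in> span S"
          using c span_diff by metis
      qed
      have "Cauchy c"
        by (rule Cauchy_if_dist_dominated[OF LIMSEQ_imp_Cauchy[OF \<open>x \<longlonglongrightarrow> l\<close>] d])
          (use cd in \<open>simp add: dist_norm dist_real_def mult.commute\<close>)
      then obtain a where "c \<longlonglongrightarrow> a"
        using Cauchy_convergent_iff convergent_def by blast
      then have "(\<lambda>n. x n - c n *\<^sub>R v) \<longlonglongrightarrow> l - a *\<^sub>R v"
        using \<open>x \<longlonglongrightarrow> l\<close> by (intro tendsto_intros)
      then have "l - a *\<^sub>R v \<in> span S"
        using insert.IH c unfolding closed_sequential_limits by (metis (no_types, lifting))
      then show "l \<in> span (insert v S)"
        using span_insert by blast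
    qed
  qed
qed simp

lemma linear_bounded_on_span_finite:
  fixes f :: "'b::real_normed_vector \<Rightarrow> 'c::real_normed_vector"
  assumes "finite S" and f: "linear f"
  shows "\<exists>K. \<forall>w\<in>span S. norm (f w) \<le> K * norm w"
  using assms(1)
proof (induction S rule: finite_induct)
  case (insert v S)
  show ?case
  proof (cases "v \<in> span S")
    case True
    then show ?thesis
      using insert.IH by (simp add: span_redundant)
  next
    case False
    define d where "d = infdist v (span S)"
    have d: "d > 0"
      unfolding d_def using closed_span_finite[OF insert.hyps(1)] False
      by (intro infdist_pos_not_in_closed) (use span_zero in auto)
    obtain K where K: "\<And>w. w \<in> span S \<Longrightarrow> norm (f w) \<le> K * norm w"
      using insert.IH by blast
    have "norm (f w) \<le> (\<bar>K\<bar> + (\<bar>K\<bar> * norm v + norm (f v)) / d) * norm w"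
      if w: "w \<in> span (insert v S)" for w
    proof -
      obtain c where c: "w - c *\<^sub>R v \<in> span S"
        using w span_insert by blast
      have c_le: "\<bar>c\<bar> \<le> norm w / d"
        using infdist_span_bound[OF c] d unfolding d_def by (simp add: field_simps)
      have "f w = f (w - c *\<^sub>R v) + c *\<^sub>R f v"
        using f by (simp add: linear_diff linear_scale)
      then have "norm (f w) \<le> norm (f (w - c *\<^sub>R v)) + \<bar>c\<bar> * norm (f v)"
        by (metis norm_scaleR norm_triangle_ineq)
      also have "norm (f (w - c *\<^sub>R v)) \<le> \<bar>K\<bar> * (norm w + \<bar>c\<bar> * norm v)"
      proof -
        have "norm (f (w - c *\<^sub>R v)) \<le> \<bar>K\<bar> * norm (w - c *\<^sub>R v)"
          using K[OF c] by (meson abs_ge_self mult_right_mono norm_ge_zero order_trans)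
        also have "\<dots> \<le> \<bar>K\<bar> * (norm w + \<bar>c\<bar> * norm v)"
          using norm_triangle_ineq4[of w "c *\<^sub>R v"] by (intro mult_left_mono) auto
        finally show ?thesis .
      qed
      also have "\<bar>K\<bar> * (norm w + \<bar>c\<bar> * norm v) + \<bar>c\<bar> * norm (f v)
          = \<bar>K\<bar> * norm w + \<bar>c\<bar> * (\<bar>K\<bar> * norm v + norm (f v))"
        by (simp add: algebra_simps)
      also have "\<dots> \<le> \<bar>K\<bar> * norm w + norm w / d * (\<bar>K\<bar> * norm v + norm (f v))"
        using c_le by (intro add_left_mono mult_right_mono) auto
      finally show ?thesis
        by (simp add: algebra_simps add_divide_distrib)
    qed
    then show ?thesis
      by blast
  qed
qed (simp add: linear_0[OF f])

lemma bounded_linear_finite_span: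
  fixes f :: "'b::real_normed_vector \<Rightarrow> 'c::real_normed_vector"
  assumes "finite (S :: 'b set)" "span S = UNIV" "linear f"
  shows "bounded_linear f"
proof -
  obtain K where "\<forall>w\<in>span S. norm (f w) \<le> K * norm w"
    using linear_bounded_on_span_finite[OF assms(1,3)] by blast
  then show ?thesis
    using assms(2,3) by (intro bounded_linear_intro[of f K]) (auto simp: linear_add linear_scale mult.commute)
qed

lemma finite_span_imp_finite_dimensional:
  assumes "finite (S :: 'b::real_vector set)" "span S = UNIV"
  obtains B where "finite_dimensional_vector_space (*\<^sub>R) (B :: 'b set)"
proof -
  obtain B :: "'b set" where B: "B \<subseteq> UNIV" "independent B" "UNIV \<subseteq> span B" "card B = dim (UNIV :: 'b set)"
    by (rule basis_exists) (rule that)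
  have "finite B"
    using independent_span_bound[OF assms(1) B(2)] assms(2) by auto
  have "finite_dimensional_vector_space (*\<^sub>R) B"
  proof unfold_locales
    show "finite B"
      by fact
    show "real_vector.independent B"
      using B(2) unfolding dependent_raw_def .
    show "module.span (*\<^sub>R) B = UNIV"
      using B(3) unfolding span_raw_def[symmetric] by auto
  qed
  then show thesis
    by (rule that)
qed

lemma bounded_linear_surj_imp_invertible:
  fixes V :: "'b::real_normed_vector \<Rightarrow> 'b"
  assumes "finite (S :: 'b set)" "span S = UNIV" and V: "bounded_linear V" "surj V"
  shows "\<exists>W. bounded_linear W \<and> V \<circ> W = id \<and> W \<circ> V = id"
proof -
  obtain B :: "'b set" where "finite_dimensional_vector_space (*\<^sub>R) B"
    by (rule finite_span_imp_finite_dimensional[OF assms(1,2)])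
  then interpret finite_dimensional_vector_space "(*\<^sub>R) :: real \<Rightarrow> 'b \<Rightarrow> 'b" B .
  have lin: "linear V"
    using V(1) bounded_linear.linear by blast
  then obtain W where W: "linear W" "V \<circ> W = id"
    using V(2) linear_surjective_right_inverse by (metis linear_def)
  have "W \<circ> V = id"
    using linear_inverse_left W lin by (metis linear_def)
  moreover have "bounded_linear W"
    using bounded_linear_finite_span[OF assms(1,2) W(1)] .
  ultimately show ?thesis
    using W(2) by blast
qed

section \<open>Uniform boundedness\<close>

lemma linear_family_bound_from_ball:
  fixes T :: "'i \<Rightarrow> 'a::real_normed_vector \<Rightarrow> 'c::real_normed_vector"
  assumes lin: "\<And>i. linear (T i)" and r: "r > 0"
    and ball: "\<And>i y. y \<in> ball x0 r \<Longrightarrow> norm (T i y) \<le> K"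
  shows "\<exists>M. \<forall>i x. norm (T i x) \<le> M * norm x"
proof -
  have small: "norm (T i y) \<le> 2 * K" if "norm y < r" for i y
  proof -
    have "norm (T i (x0 + y)) \<le> K" "norm (T i x0) \<le> K"
      using ball that r by (auto simp: dist_norm)
    moreover have "T i y = T i (x0 + y) - T i x0"
      using lin by (simp add: linear_add)
    ultimately show ?thesis
      using norm_triangle_ineq4[of "T i (x0 + y)" "T i x0"] by simp
  qed
  have "norm (T i x) \<le> (4 * K / r) * norm x" for i x
  proof (cases "x = 0")
    case True
    then show ?thesis
      using lin by (simp add: linear_0)
  next
    case False
    define c where "c = r / (2 * norm x)"
    have c: "c > 0"
      unfolding c_def using False r by simp
    have "c * norm (T i x) = norm (T i (c *\<^sub>R x))"
      using lin c by (simp add: linear_scale)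
    also have "\<dots> \<le> 2 * K"
      using c_def False r by (intro small) simp
    finally show ?thesis
      using False r unfolding c_def by (simp add: field_simps)
  qed
  then show ?thesis
    by blast
qed

lemma uniform_boundedness:
  fixes T :: "'i \<Rightarrow> 'a::banach \<Rightarrow> 'c::real_normed_vector"
  assumes bl: "\<And>i. bounded_linear (T i)" and pointwise: "\<And>x. \<exists>M. \<forall>i. norm (T i x) \<le> M"
  shows "\<exists>M. \<forall>i x. norm (T i x) \<le> M * norm x"
proof -
  define F where "F k = {x. \<forall>i. norm (T i x) \<le> real k}" for k :: nat
  have "closed (F k)" for k
  proof -
    have "F k = (\<Inter>i. {x. norm (T i x) \<le> real k})"
      unfolding F_def by auto
    moreover have "closed {x. norm (T i x) \<le> real k}" for i
      by (intro closed_Collect_le continuous_on_norm continuous_on_const linear_continuous_on[OF bl])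
    ultimately show ?thesis
      by auto
  qed
  moreover have "\<Union> (range F) = UNIV"
  proof safe
    fix x :: 'a
    obtain M where "\<forall>i. norm (T i x) \<le> M"
      using pointwise by blast
    moreover obtain k :: nat where "M \<le> real k"
      using real_arch_simple by blast
    ultimately show "x \<in> \<Union> (range F)"
      unfolding F_def by (auto intro: order_trans)
  qed simp
  ultimately obtain k where "interior (F k) \<noteq> {}"
    using Baire_category_alt[of euclidean "range F"]
    by (force simp: completely_metrizable_space_euclidean closed_closedin[symmetric])
  then obtain x0 r where "r > 0" "ball x0 r \<subseteq> F k"
    by (meson ex_in_conv interior_subset open_contains_ball_eq open_interior subset_trans)
  then show ?thesis
    using bl by (intro linear_family_bound_from_ball[of T r x0 "real k"])
      (auto simp: F_def bounded_linear.linear)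
qed

section \<open>Strongly continuous semigroups\<close>

lemma C0_semigroup_bounded_linear: "C0_semigroup T \<Longrightarrow> t \<ge> 0 \<Longrightarrow> bounded_linear (T t)"
  unfolding C0_semigroup_def by blast

lemma C0_semigroup_linear: "C0_semigroup T \<Longrightarrow> t \<ge> 0 \<Longrightarrow> linear (T t)"
  using C0_semigroup_bounded_linear bounded_linear.linear by blast

lemma C0_semigroup_zero: "C0_semigroup T \<Longrightarrow> T 0 x = x"
  unfolding C0_semigroup_def by simp

lemma C0_semigroup_add: "C0_semigroup T \<Longrightarrow> s \<ge> 0 \<Longrightarrow> t \<ge> 0 \<Longrightarrow> T (s + t) x = T s (T t x)"
  unfolding C0_semigroup_def by (metis comp_apply)

lemma C0_semigroup_near_zero:
  assumes T: "C0_semigroup T" and "e > 0"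
  obtains d where "d > 0" "\<And>h. 0 \<le> h \<Longrightarrow> h < d \<Longrightarrow> norm (T h x - x) < e"
proof -
  have "((\<lambda>t. T t x) \<longlongrightarrow> x) (at_right 0)"
    using T unfolding C0_semigroup_def by blast
  then have "\<forall>\<^sub>F t in at_right 0. dist (T t x) x < e"
    using \<open>e > 0\<close> by (rule tendstoD)
  then obtain d where "d > 0" "\<And>t. 0 < t \<Longrightarrow> t < d \<Longrightarrow> dist (T t x) x < e"
    unfolding eventually_at_right_field by auto
  then show thesis
    using \<open>e > 0\<close> C0_semigroup_zero[OF T]
    by (intro that[of d]) (auto simp: dist_norm le_less)
qed

lemma C0_semigroup_tendsto_sequentially:
  assumes T: "C0_semigroup T" and t: "\<And>n. t n \<ge> 0" "t \<longlonglongrightarrow> 0"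
  shows "(\<lambda>n. T (t n) x) \<longlonglongrightarrow> x"
proof (rule tendstoI)
  fix e :: real
  assume "e > 0"
  then obtain d where d: "d > 0" "\<And>h. 0 \<le> h \<Longrightarrow> h < d \<Longrightarrow> norm (T h x - x) < e"
    using C0_semigroup_near_zero[OF T] by metis
  have "\<forall>\<^sub>F n in sequentially. t n < d"
    using order_tendstoD(2)[OF t(2) d(1)] .
  then show "\<forall>\<^sub>F n in sequentially. dist (T (t n) x) x < e"
    by eventually_elim (use d t(1) in \<open>auto simp: dist_norm\<close>)
qed

lemma C0_semigroup_locally_bounded:
  assumes T: "C0_semigroup T"
  obtains d M where "d > 0" "M \<ge> 1" "\<And>t x. 0 \<le> t \<Longrightarrow> t \<le> d \<Longrightarrow> norm (T t x) \<le> M * norm x"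
proof (rule ccontr)
  \<comment> \<open>otherwise some \<open>T (t n)\<close> with \<open>t n \<rightarrow> 0\<close> are pointwise bounded (by strong continuity)
    but not uniformly bounded, against the uniform boundedness principle\<close>
  assume "\<not> thesis"
  have "\<exists>t x. 0 \<le> t \<and> t \<le> 1 / real (Suc n) \<and> norm (T t x) > real (Suc n) * norm x" for n
  proof (rule ccontr)
    assume "\<not> ?thesis"
    then show False
      using that[of "1 / real (Suc n)" "real (Suc n)"] \<open>\<not> thesis\<close> by (auto simp: not_less)
  qed
  then obtain t x where t: "\<And>n. 0 \<le> t n" "\<And>n. t n \<le> 1 / real (Suc n)"
    and x: "\<And>n. norm (T (t n) (x n)) > real (Suc n) * norm (x n)"
    by metis
  have "t \<longlonglongrightarrow> 0"
    using t by (intro real_tendsto_sandwich[OF _ _ tendsto_const LIMSEQ_inverse_real_of_nat])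
      (auto simp: inverse_eq_divide)
  then have "Bseq (\<lambda>n. T (t n) y)" for y
    by (intro convergent_imp_Bseq convergentI[OF C0_semigroup_tendsto_sequentially[OF T t(1)]])
  then have "\<exists>M. \<forall>n. norm (T (t n) y) \<le> M" for y
    unfolding Bseq_def by blast
  then obtain M where M: "\<And>n y. norm (T (t n) y) \<le> M * norm y"
    using uniform_boundedness[of "\<lambda>n. T (t n)"] C0_semigroup_bounded_linear[OF T t(1)]
    by metis
  obtain n :: nat where "M \<le> real n"
    using real_arch_simple by blast
  then have "norm (T (t n) (x n)) \<le> real (Suc n) * norm (x n)"
    using M[of n "x n"] mult_right_mono[of M "real (Suc n)" "norm (x n)"] by simp
  then show False
    using x[of n] by simp
qed

lemma C0_semigroup_iterated_bound:
  assumes T: "C0_semigroup T" and "d > 0" "M \<ge> 0"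
    and local: "\<And>t x. 0 \<le> t \<Longrightarrow> t \<le> d \<Longrightarrow> norm (T t x) \<le> M * norm x"
    and r: "0 \<le> r" "r \<le> d"
  shows "norm (T (real k * d + r) x) \<le> M ^ Suc k * norm x"
proof (induction k arbitrary: x)
  case 0
  then show ?case
    using local r by simp
next
  case (Suc k)
  have "T (real (Suc k) * d + r) x = T d (T (real k * d + r) x)"
    using C0_semigroup_add[OF T, of d "real k * d + r"] \<open>d > 0\<close> r by (simp add: algebra_simps)
  also have "norm \<dots> \<le> M * norm (T (real k * d + r) x)"
    using local \<open>d > 0\<close> by simp
  also have "\<dots> \<le> M * (M ^ Suc k * norm x)"
    using Suc.IH \<open>M \<ge> 0\<close> by (rule mult_left_mono)
  finally show ?case
    by simp
qed

lemma C0_semigroup_exponential_bound: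
  assumes T: "C0_semigroup T"
  obtains M w where "M \<ge> 1" "w > 0" "\<And>t x. t \<ge> 0 \<Longrightarrow> norm (T t x) \<le> M * exp (w * t) * norm x"
proof -
  obtain d M where d: "d > 0" and M: "M \<ge> 1"
    and local: "\<And>t x. 0 \<le> t \<Longrightarrow> t \<le> d \<Longrightarrow> norm (T t x) \<le> M * norm x"
    using C0_semigroup_locally_bounded[OF T] by blast
  define w where "w = ln M / d + 1"
  have "ln M \<ge> 0"
    using M by simp
  then have w: "w > 0"
    unfolding w_def using d by (simp add: add_nonneg_pos)
  have "norm (T t x) \<le> M * exp (w * t) * norm x" if t: "t \<ge> 0" for t x
  proof -
    define k where "k = nat \<lfloor>t / d\<rfloor>"
    have k: "real k \<le> t / d" "t / d < real k + 1"
      unfolding k_def using t d by (simp_all add: of_nat_nat)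
    have "norm (T t x) = norm (T (real k * d + (t - real k * d)) x)"
      by simp
    also have "\<dots> \<le> M ^ Suc k * norm x"
      using k d M by (intro C0_semigroup_iterated_bound[OF T d _ local]) (auto simp: field_simps)
    also have "M ^ Suc k = M * exp (real k * ln M)"
      using M by (simp add: exp_of_nat_mult)
    also have "exp (real k * ln M) \<le> exp (w * t)"
    proof -
      have "real k * ln M \<le> (t / d) * ln M"
        using k \<open>ln M \<ge> 0\<close> by (intro mult_right_mono)
      also have "\<dots> \<le> w * t"
        unfolding w_def using t by (simp add: algebra_simps)
      finally show ?thesis
        by simp
    qed
    finally show ?thesis
      using M by (simp add: mult_left_mono mult_right_mono)
  qed
  then show thesis
    using that M w by blast
qed

lemma C0_semigroup_continuous_on:
  assumes T: "C0_semigroup T"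
  shows "continuous_on {0..} (\<lambda>t. T t x)"
  unfolding continuous_on_iff
proof (intro ballI allI impI)
  fix t0 e :: real
  assume t0: "t0 \<in> {0..}" and e: "e > 0"
  obtain M w where M: "M \<ge> 1" and w: "w > 0"
    and bound: "\<And>t x. t \<ge> 0 \<Longrightarrow> norm (T t x) \<le> M * exp (w * t) * norm x"
    using C0_semigroup_exponential_bound[OF T] by metis
  define K where "K = M * exp (w * t0)"
  have K: "K > 0"
    unfolding K_def using M by simp
  obtain d where d: "d > 0" "\<And>h. 0 \<le> h \<Longrightarrow> h < d \<Longrightarrow> norm (T h x - x) < e / K"
    using C0_semigroup_near_zero[OF T, of "e / K"] e K by auto
  have "dist (T s x) (T t0 x) < e" if s: "s \<ge> 0" "\<bar>s - t0\<bar> < d" for s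
  proof -
    \<comment> \<open>\<open>a = min s t0\<close> and \<open>b = \<bar>s - t0\<bar>\<close>\<close>
    obtain a b where ab: "a \<ge> 0" "b \<ge> 0" "a \<le> t0" "b < d" "{s, t0} = {a, a + b}"
    proof (cases "s \<le> t0")
      case True
      then show thesis
        using that[of s "t0 - s"] s by auto
    next
      case False
      then show thesis
        using that[of t0 "s - t0"] s t0 by auto
    qed
    have "T (a + b) x - T a x = T a (T b x - x)"
      using C0_semigroup_add[OF T ab(1,2)] C0_semigroup_linear[OF T ab(1)] by (simp add: linear_diff)
    moreover have "norm (T a (T b x - x)) \<le> K * norm (T b x - x)"
    proof -
      have "M * exp (w * a) \<le> K"
        unfolding K_def using ab(3) w M by (intro mult_left_mono) auto
      then show ?thesis
        using bound[OF ab(1), of "T b x - x"] by (meson mult_right_mono norm_ge_zero order_trans)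
    qed
    moreover have "K * norm (T b x - x) < e"
      using d(2)[OF ab(2,4)] K by (simp add: field_simps)
    ultimately have "dist (T (a + b) x) (T a x) < e"
      by (simp add: dist_norm)
    then show ?thesis
      using ab(5) by (metis dist_commute doubleton_eq_iff)
  qed
  then show "\<exists>d>0. \<forall>s\<in>{0..}. dist s t0 < d \<longrightarrow> dist (T s x) (T t0 x) < e"
    using d(1) by (auto simp: dist_real_def)
qed

section \<open>Laplace transform\<close>

lemma has_integral_exp_neg:
  fixes k :: real
  assumes "k > 0" "a \<le> b"
  shows "((\<lambda>t. C * exp (- k * t)) has_integral C * (exp (- k * a) - exp (- k * b)) / k) {a..b}"
proof -
  have "((\<lambda>t. exp (- k * t)) has_integral (- exp (- k * b) / k) - (- exp (- k * a) / k)) {a..b}"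
  proof (rule fundamental_theorem_of_calculus[OF \<open>a \<le> b\<close>])
    fix x
    assume "x \<in> {a..b}"
    have "((\<lambda>t. - exp (- k * t) / k) has_real_derivative exp (- k * x)) (at x within {a..b})"
      using \<open>k > 0\<close> by (auto intro!: derivative_eq_intros simp: field_simps)
    then show "((\<lambda>t. - exp (- k * t) / k) has_vector_derivative exp (- k * x)) (at x within {a..b})"
      by (simp add: has_real_derivative_iff_has_vector_derivative)
  qed
  moreover have "C * (- exp (- k * b) / k - - exp (- k * a) / k) = C * (exp (- k * a) - exp (- k * b)) / k"
    by (simp add: diff_divide_distrib right_diff_distrib)
  ultimately show ?thesis
    using has_integral_mult_right by metis
qed

lemma integral_average_tendsto:
  fixes f :: "real \<Rightarrow> 'a::banach"
  assumes "continuous_on {0..} f"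
  shows "((\<lambda>h. (1 / h) *\<^sub>R integral {0..h} f) \<longlongrightarrow> f 0) (at_right 0)"
proof -
  have "((\<lambda>u. integral {0..u} f) has_vector_derivative f 0) (at 0 within {0..1})"
    by (intro integral_has_vector_derivative continuous_on_subset[OF assms]) auto
  then have "((\<lambda>h. (integral {0..h} f - integral {0..0} f - (h - 0) *\<^sub>R f 0) /\<^sub>R norm (h - 0))
      \<longlongrightarrow> 0) (at_right 0)"
    unfolding has_vector_derivative_def has_derivative_at_within at_within_Icc_at_right[OF zero_less_one]
    by blast
  then have "((\<lambda>h. (integral {0..h} f - integral {0..0} f - (h - 0) *\<^sub>R f 0) /\<^sub>R norm (h - 0) + f 0)
      \<longlongrightarrow> f 0) (at_right 0)"
    using tendsto_add[OF _ tendsto_const, of _ 0 _ "f 0"] by simp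
  moreover have "\<forall>\<^sub>F h in at_right 0. (integral {0..h} f - integral {0..0} f - (h - 0) *\<^sub>R f 0) /\<^sub>R norm (h - 0) + f 0
      = (1 / h) *\<^sub>R integral {0..h} f"
    using eventually_at_right_less[of 0] by eventually_elim (simp add: scaleR_diff_right inverse_eq_divide)
  ultimately show ?thesis
    by (rule Lim_transform_eventually)
qed

lemma norm_integral_diff_exponential_decay:
  fixes g :: "real \<Rightarrow> 'a::banach"
  assumes cont: "continuous_on {0..} g" and k: "k > 0"
    and bound: "\<And>t. t \<ge> 0 \<Longrightarrow> norm (g t) \<le> C * exp (- k * t)"
    and ab: "0 \<le> a" "a \<le> b"
  shows "norm (integral {0..b} g - integral {0..a} g) \<le> C * exp (- k * a) / k"
proof -
  have "integral {0..b} g - integral {0..a} g = integral {a..b} g"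
    using Henstock_Kurzweil_Integration.integral_combine[of 0 a b g] ab
      integrable_continuous_interval[OF continuous_on_subset[OF cont]] by (simp add: algebra_simps)
  also have "norm \<dots> \<le> integral {a..b} (\<lambda>t. C * exp (- k * t))"
  proof (rule integral_norm_bound_integral)
    show "g integrable_on {a..b}"
      using ab by (intro integrable_continuous_interval continuous_on_subset[OF cont]) auto
    show "(\<lambda>t. C * exp (- k * t)) integrable_on {a..b}"
      using has_integral_exp_neg[OF k ab(2)] by blast
  qed (use bound ab in auto)
  also have "\<dots> = C * (exp (- k * a) - exp (- k * b)) / k"
    using has_integral_exp_neg[OF k ab(2)] by (rule integral_unique)
  also have "\<dots> \<le> C * exp (- k * a) / k"
  proof -
    have "norm (g 0) \<le> C"
      using bound[of 0] by simp
    then have "C \<ge> 0"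
      by (rule order_trans[OF norm_ge_zero])
    then show ?thesis
      using k by (simp add: divide_right_mono mult_left_mono)
  qed
  finally show ?thesis .
qed

lemma integral_at_top_exponential_decay:
  fixes g :: "real \<Rightarrow> 'a::banach"
  assumes cont: "continuous_on {0..} g" and k: "k > 0"
    and bound: "\<And>t. t \<ge> 0 \<Longrightarrow> norm (g t) \<le> C * exp (- k * t)"
  obtains I where "((\<lambda>b. integral {0..b} g) \<longlongrightarrow> I) at_top"
    "\<And>b. b \<ge> 0 \<Longrightarrow> norm (I - integral {0..b} g) \<le> C * exp (- k * b) / k"
proof -
  let ?G = "\<lambda>b. integral {0..b} g"
  have tail: "norm (?G b - ?G a) \<le> C * exp (- k * a) / k" if "0 \<le> a" "a \<le> b" for a b
    using cont k bound that by (rule norm_integral_diff_exponential_decay)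
  have cauchy: "cauchy_filter (filtermap ?G at_top)"
    unfolding cauchy_filter_metric_filtermap
  proof (intro allI impI)
    fix e :: real
    assume "e > 0"
    have "((\<lambda>b. C * exp (- k * b) / k) \<longlongrightarrow> 0) at_top"
      using k by real_asymp
    then have "\<forall>\<^sub>F b in at_top. C * exp (- k * b) / k < e / 2"
      using \<open>e > 0\<close> by (intro order_tendstoD(2)) auto
    then have "\<forall>\<^sub>F b in at_top. b \<ge> 0 \<and> C * exp (- k * b) / k < e / 2"
      using eventually_ge_at_top[of 0] by (rule eventually_conj[rotated])
    then obtain B where B: "B \<ge> 0" "C * exp (- k * B) / k < e / 2"
      unfolding eventually_at_top_linorder by blast
    have "dist (?G x) (?G y) < e" if "x \<ge> B" "y \<ge> B" for x y
    proof -
      have "dist (?G x) (?G y) \<le> norm (?G x - ?G B) + norm (?G y - ?G B)"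
        using norm_triangle_ineq4[of "?G x - ?G B" "?G y - ?G B"] by (simp add: dist_norm)
      then show ?thesis
        using tail[OF B(1) that(1)] tail[OF B(1) that(2)] B(2) by linarith
    qed
    then show "\<exists>P. eventually P at_top \<and> (\<forall>x y. P x \<and> P y \<longrightarrow> dist (?G x) (?G y) < e)"
      by (intro exI[of _ "\<lambda>b. b \<ge> B"]) (auto simp: eventually_ge_at_top)
  qed
  obtain I where "filtermap ?G at_top \<le> nhds I"
    using cauchy_filter_complete_converges[OF cauchy complete_UNIV] by (auto simp: filtermap_bot_iff)
  then have lim: "(?G \<longlongrightarrow> I) at_top"
    by (simp add: filterlim_def)
  have "norm (I - ?G b) \<le> C * exp (- k * b) / k" if "b \<ge> 0" for b
  proof (rule tendsto_upperbound)
    show "((\<lambda>c. norm (?G c - ?G b)) \<longlongrightarrow> norm (I - ?G b)) at_top"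
      by (intro tendsto_intros lim)
    show "\<forall>\<^sub>F c in at_top. norm (?G c - ?G b) \<le> C * exp (- k * b) / k"
      using eventually_ge_at_top[of b] by eventually_elim (rule tail[OF that])
  qed simp
  with lim show thesis
    by (rule that)
qed

text \<open>An improper integral over \<open>[0, \<infinity>)\<close>; where the limit does not exist, \<^const>\<open>Lim\<close> gives an
  unspecified value, so all results below assume an exponential bound on \<open>f\<close>.\<close>

definition laplace :: "(real \<Rightarrow> 'a::banach) \<Rightarrow> real \<Rightarrow> 'a" where
  "laplace f lam = Lim at_top (\<lambda>b. integral {0..b} (\<lambda>t. exp (- lam * t) *\<^sub>R f t))"

lemma laplace_eqI:
  assumes "((\<lambda>b. integral {0..b} (\<lambda>t. exp (- lam * t) *\<^sub>R f t)) \<longlongrightarrow> I) at_top"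
  shows "laplace f lam = I"
  unfolding laplace_def using assms by (intro tendsto_Lim) auto

lemma laplace_cong:
  assumes "\<And>t. t \<ge> 0 \<Longrightarrow> f t = g t"
  shows "laplace f lam = laplace g lam"
proof -
  have "integral {0..b} (\<lambda>t. exp (- lam * t) *\<^sub>R f t) = integral {0..b} (\<lambda>t. exp (- lam * t) *\<^sub>R g t)" for b
    using assms by (intro integral_cong) auto
  then show ?thesis
    unfolding laplace_def by simp
qed

lemma integrable_laplace_integrand:
  fixes f :: "real \<Rightarrow> 'a::banach"
  assumes "continuous_on {0..} f" "a \<ge> 0"
  shows "(\<lambda>t. exp (- lam * t) *\<^sub>R f t) integrable_on {a..b}"
proof -
  have "continuous_on {a..b} f"
    using assms by (auto intro: continuous_on_subset)
  then show ?thesis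
    by (auto intro!: integrable_continuous_interval continuous_intros)
qed

context
  fixes f :: "real \<Rightarrow> 'a::banach" and C w lam :: real
  assumes cont: "continuous_on {0..} f"
    and bound: "\<And>t. t \<ge> 0 \<Longrightarrow> norm (f t) \<le> C * exp (w * t)"
    and lam: "lam > w"
begin

lemma laplace_tendsto:
  "((\<lambda>b. integral {0..b} (\<lambda>t. exp (- lam * t) *\<^sub>R f t)) \<longlongrightarrow> laplace f lam) at_top"
  and norm_laplace_minus_integral_le:
  "b \<ge> 0 \<Longrightarrow> norm (laplace f lam - integral {0..b} (\<lambda>t. exp (- lam * t) *\<^sub>R f t))
     \<le> C * exp (- (lam - w) * b) / (lam - w)"
proof -
  have decay: "norm (exp (- lam * t) *\<^sub>R f t) \<le> C * exp (- (lam - w) * t)" if "t \<ge> 0" for t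
  proof -
    have "norm (exp (- lam * t) *\<^sub>R f t) \<le> exp (- lam * t) * (C * exp (w * t))"
      using bound[OF that] by (simp add: mult_left_mono)
    also have "\<dots> = C * exp (- (lam - w) * t)"
      by (simp add: algebra_simps flip: exp_add)
    finally show ?thesis .
  qed
  obtain I where I: "((\<lambda>b. integral {0..b} (\<lambda>t. exp (- lam * t) *\<^sub>R f t)) \<longlongrightarrow> I) at_top"
    "\<And>b. b \<ge> 0 \<Longrightarrow> norm (I - integral {0..b} (\<lambda>t. exp (- lam * t) *\<^sub>R f t))
      \<le> C * exp (- (lam - w) * b) / (lam - w)"
    by (rule integral_at_top_exponential_decay[OF _ _ decay])
      (use cont lam in \<open>auto intro!: continuous_intros\<close>)
  moreover have "laplace f lam = I"
    using I(1) by (rule laplace_eqI)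
  ultimately show "((\<lambda>b. integral {0..b} (\<lambda>t. exp (- lam * t) *\<^sub>R f t)) \<longlongrightarrow> laplace f lam) at_top"
    "b \<ge> 0 \<Longrightarrow> norm (laplace f lam - integral {0..b} (\<lambda>t. exp (- lam * t) *\<^sub>R f t))
      \<le> C * exp (- (lam - w) * b) / (lam - w)"
    by simp_all
qed

lemma norm_laplace_le: "norm (laplace f lam) \<le> C / (lam - w)"
  using norm_laplace_minus_integral_le[of 0] by simp

lemma laplace_bounded_linear_image:
  assumes "bounded_linear g"
  shows "laplace (\<lambda>t. g (f t)) lam = g (laplace f lam)"
proof (rule laplace_eqI)
  have "integral {0..b} (\<lambda>t. exp (- lam * t) *\<^sub>R g (f t)) = g (integral {0..b} (\<lambda>t. exp (- lam * t) *\<^sub>R f t))"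
    for b
    using integral_linear[OF integrable_laplace_integrand[OF cont order_refl] assms]
    by (simp add: o_def linear_scale bounded_linear.linear[OF assms])
  then show "((\<lambda>b. integral {0..b} (\<lambda>t. exp (- lam * t) *\<^sub>R g (f t))) \<longlongrightarrow> g (laplace f lam)) at_top"
    using bounded_linear.tendsto[OF assms laplace_tendsto] by simp
qed

lemma laplace_shift:
  assumes "h \<ge> 0"
  shows "laplace (\<lambda>t. f (t + h)) lam
    = exp (lam * h) *\<^sub>R (laplace f lam - integral {0..h} (\<lambda>t. exp (- lam * t) *\<^sub>R f t))"
proof (rule laplace_eqI)
  define F where "F t = exp (- lam * t) *\<^sub>R f t" for t
  have shift: "integral {0..b} (\<lambda>t. exp (- lam * t) *\<^sub>R f (t + h))
      = exp (lam * h) *\<^sub>R (integral {0..b + h} F - integral {0..h} F)" if "b \<ge> 0" for b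
  proof -
    have "integral {0..b} (\<lambda>t. exp (- lam * t) *\<^sub>R f (t + h))
        = integral {0..b} ((\<lambda>s. exp (lam * h) *\<^sub>R F s) \<circ> (+) h)"
      unfolding F_def by (intro integral_cong) (simp add: algebra_simps flip: exp_add)
    also have "\<dots> = exp (lam * h) *\<^sub>R integral {h..b + h} F"
      by (simp add: integral_shift_Icc_real)
    also have "integral {h..b + h} F = integral {0..b + h} F - integral {0..h} F"
    proof -
      have "integral {0..h} F + integral {h..b + h} F = integral {0..b + h} F"
        using that assms integrable_laplace_integrand[OF cont order_refl] unfolding F_def
        by (intro Henstock_Kurzweil_Integration.integral_combine) auto
      then show ?thesis
        by (simp add: algebra_simps)
    qed
    finally show ?thesis .
  qed
  have "filterlim (\<lambda>b. b + h) at_top at_top"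
    by real_asymp
  then have "((\<lambda>b. integral {0..b + h} F) \<longlongrightarrow> laplace f lam) at_top"
    unfolding F_def using filterlim_compose[OF laplace_tendsto] by blast
  then have "((\<lambda>b. exp (lam * h) *\<^sub>R (integral {0..b + h} F - integral {0..h} F))
      \<longlongrightarrow> exp (lam * h) *\<^sub>R (laplace f lam - integral {0..h} F)) at_top"
    by (intro tendsto_intros)
  moreover have "\<forall>\<^sub>F b in at_top. exp (lam * h) *\<^sub>R (integral {0..b + h} F - integral {0..h} F)
      = integral {0..b} (\<lambda>t. exp (- lam * t) *\<^sub>R f (t + h))"
    using eventually_ge_at_top[of 0] by eventually_elim (rule shift[symmetric])
  ultimately show "((\<lambda>b. integral {0..b} (\<lambda>t. exp (- lam * t) *\<^sub>R f (t + h)))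
      \<longlongrightarrow> exp (lam * h) *\<^sub>R (laplace f lam - integral {0..h} F)) at_top"
    by (rule Lim_transform_eventually)
qed

lemma laplace_shift_difference_quotient:
  "((\<lambda>h. (1 / h) *\<^sub>R (laplace (\<lambda>t. f (t + h)) lam - laplace f lam))
     \<longlongrightarrow> lam *\<^sub>R laplace f lam - f 0) (at_right 0)"
proof -
  define F where "F t = exp (- lam * t) *\<^sub>R f t" for t
  have "((\<lambda>h. ((exp (lam * h) - 1) / h) *\<^sub>R laplace f lam - exp (lam * h) *\<^sub>R ((1 / h) *\<^sub>R integral {0..h} F))
      \<longlongrightarrow> lam *\<^sub>R laplace f lam - 1 *\<^sub>R F 0) (at_right 0)"
  proof (intro tendsto_intros)
    show "((\<lambda>h. (exp (lam * h) - 1) / h) \<longlongrightarrow> lam) (at_right 0)"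
      by real_asymp
    show "((\<lambda>h. exp (lam * h)) \<longlongrightarrow> 1) (at_right 0)"
      by real_asymp
    show "((\<lambda>h. (1 / h) *\<^sub>R integral {0..h} F) \<longlongrightarrow> F 0) (at_right 0)"
      unfolding F_def by (intro integral_average_tendsto continuous_intros cont)
  qed
  moreover have "\<forall>\<^sub>F h in at_right 0.
      ((exp (lam * h) - 1) / h) *\<^sub>R laplace f lam - exp (lam * h) *\<^sub>R ((1 / h) *\<^sub>R integral {0..h} F)
      = (1 / h) *\<^sub>R (laplace (\<lambda>t. f (t + h)) lam - laplace f lam)"
    using eventually_at_right_less[of 0]
  proof eventually_elim
    case (elim h)
    then show ?case
      unfolding F_def laplace_shift[OF less_imp_le[OF elim]]
      by (simp add: scaleR_diff_right scaleR_diff_left diff_divide_distrib)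
  qed
  ultimately show ?thesis
    by (simp add: F_def Lim_transform_eventually)
qed

end

lemma laplace_add:
  fixes f g :: "real \<Rightarrow> 'a::banach"
  assumes "continuous_on {0..} f" "\<And>t. t \<ge> 0 \<Longrightarrow> norm (f t) \<le> C * exp (w * t)"
    and "continuous_on {0..} g" "\<And>t. t \<ge> 0 \<Longrightarrow> norm (g t) \<le> C' * exp (w' * t)"
    and "lam > w" "lam > w'"
  shows "laplace (\<lambda>t. f t + g t) lam = laplace f lam + laplace g lam"
proof (rule laplace_eqI)
  have "integral {0..b} (\<lambda>t. exp (- lam * t) *\<^sub>R (f t + g t))
      = integral {0..b} (\<lambda>t. exp (- lam * t) *\<^sub>R f t) + integral {0..b} (\<lambda>t. exp (- lam * t) *\<^sub>R g t)" for b
    unfolding scaleR_add_right using assms by (intro integral_add integrable_laplace_integrand) auto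
  then show "((\<lambda>b. integral {0..b} (\<lambda>t. exp (- lam * t) *\<^sub>R (f t + g t)))
      \<longlongrightarrow> laplace f lam + laplace g lam) at_top"
    using tendsto_add[OF laplace_tendsto[OF assms(1,2,5)] laplace_tendsto[OF assms(3,4,6)]] by simp
qed

lemma laplace_const:
  assumes "lam > 0"
  shows "laplace (\<lambda>t. c) lam = (1 / lam) *\<^sub>R c"
proof (rule laplace_eqI)
  have "((\<lambda>b. exp (- lam * b)) \<longlongrightarrow> 0) at_top"
    using assms by real_asymp
  then have "((\<lambda>b. ((1 - exp (- lam * b)) / lam) *\<^sub>R c) \<longlongrightarrow> ((1 - 0) / lam) *\<^sub>R c) at_top"
    using assms by (intro tendsto_intros) auto
  moreover have "\<forall>\<^sub>F b in at_top. ((1 - exp (- lam * b)) / lam) *\<^sub>R c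
      = integral {0..b} (\<lambda>t. exp (- lam * t) *\<^sub>R c)"
    using eventually_ge_at_top[of 0]
  proof eventually_elim
    case (elim b)
    show ?case
      using has_integral_scaleR_left[OF has_integral_exp_neg[OF assms elim, of 1], of c]
      by (simp add: integral_unique inverse_eq_divide)
  qed
  ultimately show "((\<lambda>b. integral {0..b} (\<lambda>t. exp (- lam * t) *\<^sub>R c)) \<longlongrightarrow> (1 / lam) *\<^sub>R c) at_top"
    using Lim_transform_eventually by fastforce
qed

lemma norm_integral_laplace_integrand_le:
  fixes g :: "real \<Rightarrow> 'a::banach"
  assumes "continuous_on {0..} g" "\<And>t. t \<in> {0..d} \<Longrightarrow> norm (g t) \<le> B" "lam > 0" "d \<ge> 0"
  shows "norm (integral {0..d} (\<lambda>t. exp (- lam * t) *\<^sub>R g t)) \<le> B / lam"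
proof -
  have "norm (integral {0..d} (\<lambda>t. exp (- lam * t) *\<^sub>R g t)) \<le> integral {0..d} (\<lambda>t. B * exp (- lam * t))"
    using assms has_integral_exp_neg[OF assms(3,4), of B]
    by (intro integral_norm_bound_integral integrable_laplace_integrand)
      (auto intro: has_integral_integrable mult_right_mono simp: mult.commute)
  also have "\<dots> = B * (1 - exp (- lam * d)) / lam"
    using integral_unique[OF has_integral_exp_neg[OF assms(3,4), of B]] by simp
  also have "\<dots> \<le> B / lam"
  proof -
    have "norm (g 0) \<le> B"
      using assms(2)[of 0] assms(4) by simp
    then have "B \<ge> 0"
      by (rule order_trans[OF norm_ge_zero])
    then show ?thesis
      using assms(3) by (intro divide_right_mono) (auto simp: mult_left_le)
  qed
  finally show ?thesis .
qed

lemma tendsto_scaleR_laplace_zero: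
  fixes g :: "real \<Rightarrow> 'a::banach"
  assumes cont: "continuous_on {0..} g" and bound: "\<And>t. t \<ge> 0 \<Longrightarrow> norm (g t) \<le> K * exp (w * t)"
    and "g 0 = 0"
  shows "((\<lambda>lam. lam *\<^sub>R laplace g lam) \<longlongrightarrow> 0) at_top"
proof (rule tendstoI)
  fix e :: real
  assume "e > 0"
  then obtain \<delta> where "\<delta> > 0" and \<delta>: "\<And>t. t \<ge> 0 \<Longrightarrow> \<bar>t\<bar> < \<delta> \<Longrightarrow> norm (g t) < e / 2"
    using cont[unfolded continuous_on_iff, rule_format, of 0 "e / 2"] \<open>g 0 = 0\<close> by (auto simp: dist_norm)
  define d where "d = \<delta> / 2"
  have "d > 0"
    using \<open>\<delta> > 0\<close> unfolding d_def by simp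
  have d: "norm (g t) \<le> e / 2" if "t \<in> {0..d}" for t
    using \<delta>[of t] that \<open>\<delta> > 0\<close> unfolding d_def by simp
  have "((\<lambda>lam. lam * (K * exp (- (lam - w) * d) / (lam - w))) \<longlongrightarrow> 0) at_top"
    using \<open>d > 0\<close> by real_asymp
  then have "\<forall>\<^sub>F lam in at_top. lam * (K * exp (- (lam - w) * d) / (lam - w)) < e / 2"
    using \<open>e > 0\<close> by (intro order_tendstoD(2)) auto
  then show "\<forall>\<^sub>F lam in at_top. dist (lam *\<^sub>R laplace g lam) 0 < e"
    using eventually_gt_at_top[of "max w 0"]
  proof eventually_elim
    case (elim lam)
    then have "lam > 0" "lam > w"
      by auto
    \<comment> \<open>split at \<open>d\<close>: on \<open>[0, d]\<close> the function \<open>g\<close> is small, the tail is exponentially small in \<open>lam\<close>\<close>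
    define I where "I = integral {0..d} (\<lambda>t. exp (- lam * t) *\<^sub>R g t)"
    have "norm (lam *\<^sub>R laplace g lam) \<le> lam * norm I + lam * norm (laplace g lam - I)"
      using \<open>lam > 0\<close> norm_triangle_ineq[of I "laplace g lam - I"]
      by (simp add: distrib_left[symmetric] mult_left_mono)
    also have "\<dots> \<le> lam * (e / 2 / lam) + lam * (K * exp (- (lam - w) * d) / (lam - w))"
      unfolding I_def using \<open>lam > 0\<close> \<open>lam > w\<close> \<open>d > 0\<close>
      by (intro add_mono mult_left_mono norm_integral_laplace_integrand_le[OF cont d]
          norm_laplace_minus_integral_le[OF cont bound]) auto
    also have "\<dots> < e"
    proof -
      have "lam * (e / 2 / lam) = e / 2"
        using \<open>lam > 0\<close> by simp
      then show ?thesis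
        using elim(1) by linarith
    qed
    finally show ?case
      by simp
  qed
qed

lemma tendsto_scaleR_laplace:
  fixes f :: "real \<Rightarrow> 'a::banach"
  assumes cont: "continuous_on {0..} f" and bound: "\<And>t. t \<ge> 0 \<Longrightarrow> norm (f t) \<le> C * exp (w * t)"
  shows "((\<lambda>lam. lam *\<^sub>R laplace f lam) \<longlongrightarrow> f 0) at_top"
proof -
  define w' where "w' = max w 0"
  define g where "g t = f t - f 0" for t
  have g_cont: "continuous_on {0..} g"
    unfolding g_def by (intro continuous_intros cont)
  have "norm (f 0) \<le> C"
    using bound[of 0] by simp
  then have "C \<ge> 0"
    by (rule order_trans[OF norm_ge_zero])
  have g_bound: "norm (g t) \<le> (C + norm (f 0)) * exp (w' * t)" if "t \<ge> 0" for t
  proof -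
    have "norm (g t) \<le> C * exp (w * t) + norm (f 0)"
      unfolding g_def using bound[OF that] norm_triangle_ineq4[of "f t" "f 0"] by linarith
    moreover have "C * exp (w * t) \<le> C * exp (w' * t)"
      using \<open>C \<ge> 0\<close> that unfolding w'_def by (auto intro!: mult_left_mono mult_right_mono)
    moreover have "norm (f 0) \<le> norm (f 0) * exp (w' * t)"
      using mult_left_mono[of 1 "exp (w' * t)" "norm (f 0)"] that unfolding w'_def by simp
    ultimately show ?thesis
      unfolding distrib_right by linarith
  qed
  have laplace_f: "lam *\<^sub>R laplace f lam = lam *\<^sub>R laplace g lam + f 0" if "lam > w'" for lam
  proof -
    have "lam > 0"
      using that unfolding w'_def by simp
    have "laplace f lam = laplace (\<lambda>t. g t + f 0) lam"
      by (simp add: g_def)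
    also have "\<dots> = laplace g lam + (1 / lam) *\<^sub>R f 0"
      using laplace_add[OF g_cont g_bound, of "\<lambda>t. f 0" "norm (f 0)" 0 lam] that \<open>lam > 0\<close>
      by (simp add: laplace_const)
    finally show ?thesis
      using \<open>lam > 0\<close> by (simp add: scaleR_add_right)
  qed
  have "g 0 = 0"
    by (simp add: g_def)
  then have "((\<lambda>lam. lam *\<^sub>R laplace g lam + f 0) \<longlongrightarrow> 0 + f 0) at_top"
    by (intro tendsto_add tendsto_const tendsto_scaleR_laplace_zero[OF g_cont g_bound])
  moreover have "\<forall>\<^sub>F lam in at_top. lam *\<^sub>R laplace g lam + f 0 = lam *\<^sub>R laplace f lam"
    using eventually_gt_at_top[of w'] by eventually_elim (simp add: laplace_f)
  ultimately show ?thesis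
    by (simp add: Lim_transform_eventually)
qed

section \<open>Resolvent of a generator\<close>

locale exponentially_bounded_semigroup =
  fixes T :: "real \<Rightarrow> 'a::banach \<Rightarrow> 'a" and M w :: real
  assumes semigroup: "C0_semigroup T"
    and bound: "\<And>t x. t \<ge> 0 \<Longrightarrow> norm (T t x) \<le> M * exp (w * t) * norm x"
begin

definition resolvent :: "real \<Rightarrow> 'a \<Rightarrow> 'a" where
  "resolvent lam x = laplace (\<lambda>t. T t x) lam"

lemma continuous_on_orbit: "continuous_on {0..} (\<lambda>t. T t x)"
  by (rule C0_semigroup_continuous_on[OF semigroup])

lemma norm_orbit_le: "t \<ge> 0 \<Longrightarrow> norm (T t x) \<le> (M * norm x) * exp (w * t)"
  using bound by (simp add: ac_simps)

lemma resolvent_tendsto: "((\<lambda>lam. lam *\<^sub>R resolvent lam x) \<longlongrightarrow> x) at_top"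
  unfolding resolvent_def using tendsto_scaleR_laplace[OF continuous_on_orbit norm_orbit_le]
  by (simp add: C0_semigroup_zero[OF semigroup])

context
  fixes lam :: real
  assumes lam: "lam > w"
begin

lemma bounded_linear_resolvent: "bounded_linear (resolvent lam)"
proof (rule bounded_linear_intro)
  show "resolvent lam (x + y) = resolvent lam x + resolvent lam y" for x y
  proof -
    have "laplace (\<lambda>t. T t (x + y)) lam = laplace (\<lambda>t. T t x + T t y) lam"
      by (intro laplace_cong) (simp add: linear_add[OF C0_semigroup_linear[OF semigroup]])
    then show ?thesis
      unfolding resolvent_def using laplace_add[OF continuous_on_orbit norm_orbit_le continuous_on_orbit norm_orbit_le lam lam]
      by simp
  qed
  show "resolvent lam (c *\<^sub>R x) = c *\<^sub>R resolvent lam x" for c x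
  proof -
    have "laplace (\<lambda>t. T t (c *\<^sub>R x)) lam = laplace (\<lambda>t. c *\<^sub>R T t x) lam"
      by (intro laplace_cong) (simp add: linear_scale[OF C0_semigroup_linear[OF semigroup]])
    then show ?thesis
      unfolding resolvent_def
      using laplace_bounded_linear_image[OF continuous_on_orbit norm_orbit_le lam bounded_linear_scaleR_right]
      by simp
  qed
  show "norm (resolvent lam x) \<le> norm x * (M / (lam - w))" for x
  proof -
    have "norm (laplace (\<lambda>t. T t x) lam) \<le> M * norm x / (lam - w)"
      by (rule norm_laplace_le[OF continuous_on_orbit norm_orbit_le lam])
    then show ?thesis
      unfolding resolvent_def by (simp add: mult.commute)
  qed
qed

lemma semigroup_resolvent:
  assumes "h \<ge> 0"
  shows "T h (resolvent lam x) = laplace (\<lambda>t. T (t + h) x) lam"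
proof -
  have "T h (resolvent lam x) = laplace (\<lambda>t. T h (T t x)) lam"
    unfolding resolvent_def
    using laplace_bounded_linear_image[OF continuous_on_orbit norm_orbit_le lam C0_semigroup_bounded_linear[OF semigroup assms]]
    by simp
  also have "\<dots> = laplace (\<lambda>t. T (t + h) x) lam"
    using C0_semigroup_add[OF semigroup assms] by (intro laplace_cong) (simp add: add.commute)
  finally show ?thesis .
qed

lemma resolvent_semigroup:
  assumes "h \<ge> 0"
  shows "resolvent lam (T h x) = T h (resolvent lam x)"
proof -
  have "resolvent lam (T h x) = laplace (\<lambda>t. T (t + h) x) lam"
    unfolding resolvent_def by (intro laplace_cong) (simp add: C0_semigroup_add[OF semigroup _ assms])
  then show ?thesis
    using semigroup_resolvent[OF assms] by simp
qed

lemma resolvent_difference_quotient: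
  "((\<lambda>h. (1 / h) *\<^sub>R (T h (resolvent lam x) - resolvent lam x))
     \<longlongrightarrow> lam *\<^sub>R resolvent lam x - x) (at_right 0)"
proof -
  have "((\<lambda>h. (1 / h) *\<^sub>R (laplace (\<lambda>t. T (t + h) x) lam - resolvent lam x))
      \<longlongrightarrow> lam *\<^sub>R resolvent lam x - x) (at_right 0)"
    using laplace_shift_difference_quotient[OF continuous_on_orbit norm_orbit_le lam, of x]
    by (simp add: resolvent_def C0_semigroup_zero[OF semigroup])
  moreover have "\<forall>\<^sub>F h in at_right 0. (1 / h) *\<^sub>R (laplace (\<lambda>t. T (t + h) x) lam - resolvent lam x)
      = (1 / h) *\<^sub>R (T h (resolvent lam x) - resolvent lam x)"
    using eventually_at_right_less[of 0] by eventually_elim (simp add: semigroup_resolvent)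
  ultimately show ?thesis
    by (rule Lim_transform_eventually)
qed

lemma resolvent_difference_quotient_tendsto:
  assumes "((\<lambda>h. (1 / h) *\<^sub>R (T h x - x)) \<longlongrightarrow> y) (at_right 0)"
  shows "((\<lambda>h. (1 / h) *\<^sub>R (T h (resolvent lam x) - resolvent lam x)) \<longlongrightarrow> resolvent lam y) (at_right 0)"
proof -
  have "((\<lambda>h. resolvent lam ((1 / h) *\<^sub>R (T h x - x))) \<longlongrightarrow> resolvent lam y) (at_right 0)"
    by (rule bounded_linear.tendsto[OF bounded_linear_resolvent assms])
  moreover have "\<forall>\<^sub>F h in at_right 0. resolvent lam ((1 / h) *\<^sub>R (T h x - x))
      = (1 / h) *\<^sub>R (T h (resolvent lam x) - resolvent lam x)"
    using eventually_at_right_less[of 0]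
    by eventually_elim
      (simp add: resolvent_semigroup linear_scale linear_diff bounded_linear.linear[OF bounded_linear_resolvent])
  ultimately show ?thesis
    by (rule Lim_transform_eventually)
qed

end

context
  fixes D B and lam :: real
  assumes D: "D = {x. \<exists>y. ((\<lambda>h. (1 / h) *\<^sub>R (T h x - x)) \<longlongrightarrow> y) (at_right 0)}"
    and B: "\<And>x. x \<in> D \<Longrightarrow> ((\<lambda>h. (1 / h) *\<^sub>R (T h x - x)) \<longlongrightarrow> B x) (at_right 0)"
    and lam: "lam > w"
begin

lemma resolvent_in_generator_domain: "resolvent lam y \<in> D"
  unfolding D using resolvent_difference_quotient[OF lam] by blast

lemma generator_resolvent_right_inverse: "lam *\<^sub>R resolvent lam y - B (resolvent lam y) = y"
proof -
  have "B (resolvent lam y) = lam *\<^sub>R resolvent lam y - y"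
    using trivial_limit_at_right_real B[OF resolvent_in_generator_domain] resolvent_difference_quotient[OF lam]
    by (rule tendsto_unique)
  then show ?thesis
    by simp
qed

lemma generator_resolvent_left_inverse:
  assumes "x \<in> D"
  shows "resolvent lam (lam *\<^sub>R x - B x) = x"
proof -
  have "resolvent lam (B x) = lam *\<^sub>R resolvent lam x - x"
    using trivial_limit_at_right_real resolvent_difference_quotient_tendsto[OF lam B[OF assms]]
      resolvent_difference_quotient[OF lam]
    by (rule tendsto_unique)
  moreover have "linear (resolvent lam)"
    using bounded_linear_resolvent[OF lam] by (rule bounded_linear.linear)
  ultimately show ?thesis
    by (simp add: linear_diff linear_scale)
qed

end

end

lemma generator_resolvent:
  assumes "generates D B"
  obtains w R where
    "\<And>lam. lam > w \<Longrightarrow> bounded_linear (R lam)"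
    "\<And>lam y. lam > w \<Longrightarrow> R lam y \<in> D \<and> lam *\<^sub>R R lam y - B (R lam y) = y"
    "\<And>lam x. lam > w \<Longrightarrow> x \<in> D \<Longrightarrow> R lam (lam *\<^sub>R x - B x) = x"
    "\<And>x. ((\<lambda>lam. lam *\<^sub>R R lam x) \<longlongrightarrow> x) at_top"
proof -
  from assms obtain T where T: "C0_semigroup T"
    and D: "D = {x. \<exists>y. ((\<lambda>h. (1 / h) *\<^sub>R (T h x - x)) \<longlongrightarrow> y) (at_right 0)}"
    and B: "\<forall>x\<in>D. ((\<lambda>h. (1 / h) *\<^sub>R (T h x - x)) \<longlongrightarrow> B x) (at_right 0)"
    unfolding generates_def by (elim exE conjE) (rule that)
  obtain M w where "\<And>t x. t \<ge> 0 \<Longrightarrow> norm (T t x) \<le> M * exp (w * t) * norm x"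
    using C0_semigroup_exponential_bound[OF T] by metis
  with T interpret exponentially_bounded_semigroup T M w
    by unfold_locales
  show thesis
  proof (rule that[of w resolvent])
    show "resolvent lam y \<in> D \<and> lam *\<^sub>R resolvent lam y - B (resolvent lam y) = y" if "lam > w" for lam y
      using resolvent_in_generator_domain[OF D B[rule_format] that]
        generator_resolvent_right_inverse[OF D B[rule_format] that] ..
  qed (use bounded_linear_resolvent resolvent_tendsto generator_resolvent_left_inverse[OF D B[rule_format]]
      in auto)
qed

section \<open>Boundary operators and the Dirichlet operator\<close>

definition linear_on :: "'a::real_vector set \<Rightarrow> ('a \<Rightarrow> 'b::real_vector) \<Rightarrow> bool" where
  "linear_on D f \<longleftrightarrow> (\<forall>x\<in>D. \<forall>y\<in>D. \<forall>c. f (x + y) = f x + f y \<and> f (c *\<^sub>R x) = c *\<^sub>R f x)"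

definition eigenspace :: "'a set \<Rightarrow> ('a \<Rightarrow> 'a::real_vector) \<Rightarrow> real \<Rightarrow> 'a set" where
  "eigenspace D Am lam = {x \<in> D. Am x = lam *\<^sub>R x}"

lemma closed_dd_operator_linear_on: "closed_dd_operator D Am \<Longrightarrow> subspace D \<and> linear_on D Am"
  unfolding closed_dd_operator_def linear_on_def by blast

lemma graph_bounded_linear_on: "graph_bounded D Am L \<Longrightarrow> linear_on D L"
  unfolding graph_bounded_def linear_on_def by blast

lemma linear_on_add: "linear_on D f \<Longrightarrow> x \<in> D \<Longrightarrow> y \<in> D \<Longrightarrow> f (x + y) = f x + f y"
  and linear_on_scale: "linear_on D f \<Longrightarrow> x \<in> D \<Longrightarrow> f (c *\<^sub>R x) = c *\<^sub>R f x"
  unfolding linear_on_def by blast+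

lemma linear_on_zero: "linear_on D f \<Longrightarrow> x \<in> D \<Longrightarrow> f 0 = 0"
  using linear_on_scale[of D f x 0] by simp

lemma linear_on_diff:
  assumes "subspace D" "linear_on D f" "x \<in> D" "y \<in> D"
  shows "f (x - y) = f x - f y"
  using linear_on_add[OF assms(2,3), of "(-1) *\<^sub>R y"] linear_on_scale[OF assms(2,4), of "-1"]
    subspace_scale[OF assms(1,4), of "-1"] by simp

lemma linear_on_comp:
  assumes "linear g" "\<And>y. g y \<in> D" "linear_on D f"
  shows "linear (f \<circ> g)"
  using assms by (intro linearI) (simp_all add: linear_add linear_scale linear_on_add linear_on_scale)

context
  fixes D :: "'a::real_vector set" and Am :: "'a \<Rightarrow> 'a" and lam :: real
  assumes D: "subspace D" and Am: "linear_on D Am"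
begin

lemma subspace_eigenspace: "subspace (eigenspace D Am lam)"
  using D Am linear_on_zero[OF Am subspace_0[OF D]] unfolding subspace_def eigenspace_def
  by (auto simp: linear_on_add linear_on_scale scaleR_add_right)

lemma eigenvector_correction:
  assumes K: "linear_on D K" and w: "w \<in> D"
    and R: "r \<in> D" "K r = 0" "lam *\<^sub>R r - Am r = lam *\<^sub>R w - Am w"
  shows "w - r \<in> eigenspace D Am lam" "K (w - r) = K w"
proof -
  have "Am (w - r) = Am w - Am r"
    by (rule linear_on_diff[OF D Am w R(1)])
  also have "Am r = lam *\<^sub>R r - (lam *\<^sub>R w - Am w)"
    using R(3) by (simp add: algebra_simps)
  finally have "Am (w - r) = lam *\<^sub>R (w - r)"
    by (simp add: algebra_simps)
  then show "w - r \<in> eigenspace D Am lam"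
    unfolding eigenspace_def using D w R(1) by (simp add: subspace_diff)
  show "K (w - r) = K w"
    using linear_on_diff[OF D K w R(1)] R(2) by simp
qed

lemma boundary_bij_eigenspace:
  assumes L: "linear_on D L" "L ` D = UNIV" and R: "linear R"
    and R_right: "\<And>y. R y \<in> D \<and> L (R y) = 0 \<and> lam *\<^sub>R R y - Am (R y) = y"
    and R_left: "\<And>x. x \<in> D \<Longrightarrow> L x = 0 \<Longrightarrow> R (lam *\<^sub>R x - Am x) = x"
  shows "bij_betw L (eigenspace D Am lam) UNIV"
proof (rule bij_betw_imageI)
  show "inj_on L (eigenspace D Am lam)"
  proof (rule inj_onI)
    fix x y
    assume xy: "x \<in> eigenspace D Am lam" "y \<in> eigenspace D Am lam" and "L x = L y"
    then have "x - y \<in> eigenspace D Am lam"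
      by (intro subspace_diff[OF subspace_eigenspace])
    moreover have "L (x - y) = 0"
      using linear_on_diff[OF D L(1)] xy \<open>L x = L y\<close> unfolding eigenspace_def by simp
    ultimately have "x - y = R 0"
      using R_left[of "x - y"] unfolding eigenspace_def by simp
    then show "x = y"
      using R by (simp add: linear_0)
  qed
  have "y \<in> L ` eigenspace D Am lam" for y
  proof -
    obtain w where w: "w \<in> D" "L w = y"
      using L(2) by (metis UNIV_I imageE)
    define r where "r = R (lam *\<^sub>R w - Am w)"
    have "r \<in> D" "L r = 0" "lam *\<^sub>R r - Am r = lam *\<^sub>R w - Am w"
      unfolding r_def using R_right by auto
    from eigenvector_correction[OF L(1) w(1) this] w(2) show ?thesis
      by (metis image_eqI)
  qed
  then show "L ` eigenspace D Am lam = UNIV"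
    by blast
qed

end

lemma dirichlet_op_eigenspace:
  assumes "bij_betw L (eigenspace D Am lam) UNIV"
  shows "dirichlet_op D Am L lam y \<in> eigenspace D Am lam" "L (dirichlet_op D Am L lam y) = y"
proof -
  obtain x where x: "x \<in> eigenspace D Am lam" "L x = y"
    using assms unfolding bij_betw_def by (metis UNIV_I imageE)
  have "x' = x" if "x' \<in> eigenspace D Am lam" "L x' = y" for x'
    using assms x that unfolding bij_betw_def by (metis inj_onD)
  with x have "\<exists>!x. x \<in> D \<and> Am x = lam *\<^sub>R x \<and> L x = y"
    unfolding eigenspace_def by blast
  from theI'[OF this] show "dirichlet_op D Am L lam y \<in> eigenspace D Am lam" "L (dirichlet_op D Am L lam y) = y"
    unfolding dirichlet_op_def eigenspace_def by auto
qed

lemma dirichlet_op_boundary: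
  assumes "bij_betw L (eigenspace D Am lam) UNIV" "x \<in> eigenspace D Am lam"
  shows "dirichlet_op D Am L lam (L x) = x"
  using dirichlet_op_eigenspace[OF assms(1), of "L x"] assms bij_betw_imp_inj_on inj_onD by metis

lemma linear_dirichlet_op:
  assumes "subspace D" "linear_on D Am" "linear_on D L" and bij: "bij_betw L (eigenspace D Am lam) UNIV"
  shows "linear (dirichlet_op D Am L lam)"
proof -
  let ?E = "eigenspace D Am lam" and ?d = "dirichlet_op D Am L lam"
  have E: "subspace ?E" "?E \<subseteq> D"
    using subspace_eigenspace[OF assms(1,2)] unfolding eigenspace_def by auto
  have d: "?d y \<in> ?E" "L (?d y) = y" for y
    using dirichlet_op_eigenspace[OF bij] by auto
  show ?thesis
  proof (rule linearI)
    show "?d (y + z) = ?d y + ?d z" for y z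
      using dirichlet_op_boundary[OF bij, of "?d y + ?d z"] d[of y] d[of z] E
      by (simp add: subspace_add linear_on_add[OF assms(3)] subset_iff)
    show "?d (c *\<^sub>R y) = c *\<^sub>R ?d y" for c y
      using dirichlet_op_boundary[OF bij, of "c *\<^sub>R ?d y"] d[of y] E
      by (simp add: subspace_scale linear_on_scale[OF assms(3)] subset_iff)
  qed
qed

lemma norm_boundary_le_norm_L_lambda:
  assumes "graph_bounded D Am L" "x \<in> eigenspace D Am lam"
  shows "norm (L x) \<le> norm_L_lambda D Am L lam * norm x"
proof (cases "x = 0")
  case True
  then show ?thesis
    using linear_on_zero[OF graph_bounded_linear_on[OF assms(1)]] assms(2) unfolding eigenspace_def by auto
next
  case False
  obtain C where C: "\<And>x. x \<in> D \<Longrightarrow> norm (L x) \<le> C * (norm x + norm (Am x))"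
    using assms(1) unfolding graph_bounded_def by blast
  have "norm (L y) / norm y \<le> \<bar>C\<bar> * (1 + \<bar>lam\<bar>)" if "y \<in> eigenspace D Am lam" for y
  proof -
    have "norm (L y) \<le> C * (norm y + norm (Am y))"
      using C that unfolding eigenspace_def by blast
    also have "\<dots> \<le> \<bar>C\<bar> * (norm y + norm (Am y))"
      by (intro mult_right_mono) auto
    also have "norm (Am y) = \<bar>lam\<bar> * norm y"
      using that unfolding eigenspace_def by simp
    finally have "norm (L y) \<le> \<bar>C\<bar> * (1 + \<bar>lam\<bar>) * norm y"
      by (simp add: algebra_simps)
    then show ?thesis
      by (cases "y = 0") (auto simp: divide_le_eq algebra_simps)
  qed
  then have "norm (L x) / norm x \<le> norm_L_lambda D Am L lam"
    unfolding norm_L_lambda_def using assms(2)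
    by (intro cSup_upper bdd_aboveI2) (auto simp: eigenspace_def)
  then show ?thesis
    using False by (simp add: divide_le_eq)
qed

lemma infdist_range_le_dirichlet_op:
  assumes L: "graph_bounded D Am L" and bij: "bij_betw L (eigenspace D Am lam) UNIV"
    and x: "x \<in> eigenspace D Am lam" and bl: "bounded_linear (\<Phi>0 \<circ> dirichlet_op D Am L lam)"
  shows "infdist (\<Phi>0 x + V (L x)) (range V)
    \<le> norm_L_lambda D Am L lam * onorm (\<Phi>0 \<circ> dirichlet_op D Am L lam) * norm x"
proof -
  have "infdist (\<Phi>0 x + V (L x)) (range V) \<le> dist (\<Phi>0 x + V (L x)) (V (L x))"
    by (rule infdist_le) simp
  also have "\<dots> = norm ((\<Phi>0 \<circ> dirichlet_op D Am L lam) (L x))"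
    using dirichlet_op_boundary[OF bij x] by (simp add: dist_norm)
  also have "\<dots> \<le> onorm (\<Phi>0 \<circ> dirichlet_op D Am L lam) * norm (L x)"
    by (rule onorm[OF bl])
  also have "\<dots> \<le> onorm (\<Phi>0 \<circ> dirichlet_op D Am L lam) * (norm_L_lambda D Am L lam * norm x)"
    by (intro mult_left_mono norm_boundary_le_norm_L_lambda[OF L x] onorm_pos_le[OF bl])
  finally show ?thesis
    by (simp add: ac_simps)
qed

lemma resolvent_correction_tendsto_zero:
  fixes R :: "real \<Rightarrow> 'a::real_normed_vector \<Rightarrow> 'a"
  assumes "\<And>x. ((\<lambda>lam. lam *\<^sub>R R lam x) \<longlongrightarrow> x) at_top"
    and "\<And>lam. lam > w \<Longrightarrow> linear (R lam)"
  shows "((\<lambda>lam. x - R lam (lam *\<^sub>R x - y)) \<longlongrightarrow> 0) at_top"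
proof -
  have "((\<lambda>lam. (x - lam *\<^sub>R R lam x) + (1 / lam) *\<^sub>R (lam *\<^sub>R R lam y)) \<longlongrightarrow> (x - x) + 0 *\<^sub>R y) at_top"
    by (intro tendsto_intros assms(1)) real_asymp
  moreover have "\<forall>\<^sub>F lam in at_top. (x - lam *\<^sub>R R lam x) + (1 / lam) *\<^sub>R (lam *\<^sub>R R lam y)
      = x - R lam (lam *\<^sub>R x - y)"
    using eventually_gt_at_top[of "max w 0"]
    by eventually_elim (simp add: assms(2) linear_diff linear_scale)
  ultimately show ?thesis
    by (simp add: Lim_transform_eventually)
qed

lemma filterlim_at_top_if_bound_times_null:
  fixes u :: "'b \<Rightarrow> 'a::real_normed_vector"
  assumes "(u \<longlongrightarrow> 0) F" "c > 0" "\<forall>\<^sub>F x in F. c \<le> P x * norm (u x)"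
  shows "filterlim P at_top F"
  unfolding filterlim_at_top
proof
  fix Z :: real
  have "\<forall>\<^sub>F x in F. norm (u x) < c / (\<bar>Z\<bar> + 1)"
    using tendstoD[OF assms(1), of "c / (\<bar>Z\<bar> + 1)"] assms(2) by simp
  with assms(3) show "\<forall>\<^sub>F x in F. Z \<le> P x"
  proof eventually_elim
    case (elim x)
    then have "norm (u x) > 0"
      using assms(2) by (cases "u x = 0") auto
    have "(\<bar>Z\<bar> + 1) * norm (u x) < c"
      using elim(2) by (simp add: field_simps add_pos_nonneg)
    also have "\<dots> \<le> P x * norm (u x)"
      by (rule elim(1))
    finally show ?case
      using \<open>norm (u x) > 0\<close> by (simp add: mult_less_cancel_right)
  qed
qed

lemma noninvertible_imp_infdist_range_pos:
  fixes V :: "'b::real_normed_vector \<Rightarrow> 'b"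
  assumes S: "finite (S :: 'b set)" "span S = UNIV"
    and V: "bounded_linear V" "\<not> (\<exists>W. bounded_linear W \<and> V \<circ> W = id \<and> W \<circ> V = id)"
  shows "\<exists>z. infdist z (range V) > 0"
proof -
  obtain z where "z \<notin> range V"
    using V bounded_linear_surj_imp_invertible[OF S] by blast
  moreover have "range V = span (V ` S)"
    using span_linear_image[OF bounded_linear.linear[OF V(1)], of S] S(2) by simp
  then have "closed (range V)"
    using closed_span_finite[OF finite_imageI[OF S(1)]] by simp
  ultimately show ?thesis
    by (blast intro: infdist_pos_not_in_closed)
qed

lemma bounded_linear_comp_dirichlet_op:
  fixes D :: "'a::banach set" and L \<Phi>0 :: "'a \<Rightarrow> 'b::real_normed_vector"
  assumes "finite (S :: 'b set)" "span S = UNIV"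
    and "closed_dd_operator D Am" "graph_bounded D Am L" "graph_bounded D Am \<Phi>0"
    and bij: "bij_betw L (eigenspace D Am lam) UNIV"
  shows "bounded_linear (\<Phi>0 \<circ> dirichlet_op D Am L lam)"
  using closed_dd_operator_linear_on[OF assms(3)] graph_bounded_linear_on[OF assms(4)]
    graph_bounded_linear_on[OF assms(5)] dirichlet_op_eigenspace[OF bij]
  by (intro bounded_linear_finite_span[OF assms(1,2)] linear_on_comp linear_dirichlet_op[OF _ _ _ bij])
    (auto simp: eigenspace_def)

lemma generator_boundary_bij_eigenspace:
  assumes Am: "closed_dd_operator D Am" and L: "graph_bounded D Am L" "L ` D = UNIV"
    and gen: "generates {x \<in> D. L x = 0} Am"
  obtains w where "\<And>lam. lam > w \<Longrightarrow> bij_betw L (eigenspace D Am lam) UNIV"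
proof -
  obtain w R where R: "\<And>lam. lam > w \<Longrightarrow> bounded_linear (R lam)"
    "\<And>lam y. lam > w \<Longrightarrow> R lam y \<in> {x \<in> D. L x = 0} \<and> lam *\<^sub>R R lam y - Am (R lam y) = y"
    "\<And>lam x. lam > w \<Longrightarrow> x \<in> {x \<in> D. L x = 0} \<Longrightarrow> R lam (lam *\<^sub>R x - Am x) = x"
    "\<And>x. ((\<lambda>lam. lam *\<^sub>R R lam x) \<longlongrightarrow> x) at_top"
    by (rule generator_resolvent[OF gen]) (rule that)
  have D: "subspace D" "linear_on D Am"
    using closed_dd_operator_linear_on[OF Am] by auto
  show thesis
  proof (rule that)
    fix lam
    assume "lam > w"
    show "bij_betw L (eigenspace D Am lam) UNIV"
    proof (rule boundary_bij_eigenspace[OF D graph_bounded_linear_on[OF L(1)] L(2), where R = "R lam"])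
      show "linear (R lam)"
        using R(1)[OF \<open>lam > w\<close>] by (rule bounded_linear.linear)
      show "R lam y \<in> D \<and> L (R lam y) = 0 \<and> lam *\<^sub>R R lam y - Am (R lam y) = y" for y
        using R(2)[OF \<open>lam > w\<close>, of y] by blast
      show "R lam (lam *\<^sub>R x - Am x) = x" if "x \<in> D" "L x = 0" for x
        using R(3)[OF \<open>lam > w\<close>, of x] that by blast
    qed
  qed
qed

lemma generator_vanishing_eigenvectors:
  assumes Am: "closed_dd_operator D Am" and \<Phi>: "graph_bounded D Am \<Phi>"
    and gen: "generates {x \<in> D. \<Phi> x = 0} Am" and z: "z \<in> \<Phi> ` D"
  obtains u where "(u \<longlongrightarrow> 0) at_top" "\<forall>\<^sub>F lam in at_top. u lam \<in> eigenspace D Am lam \<and> \<Phi> (u lam) = z"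
proof -
  obtain w R where R: "\<And>lam. lam > w \<Longrightarrow> bounded_linear (R lam)"
    "\<And>lam y. lam > w \<Longrightarrow> R lam y \<in> {x \<in> D. \<Phi> x = 0} \<and> lam *\<^sub>R R lam y - Am (R lam y) = y"
    "\<And>lam x. lam > w \<Longrightarrow> x \<in> {x \<in> D. \<Phi> x = 0} \<Longrightarrow> R lam (lam *\<^sub>R x - Am x) = x"
    "\<And>x. ((\<lambda>lam. lam *\<^sub>R R lam x) \<longlongrightarrow> x) at_top"
    by (rule generator_resolvent[OF gen]) (rule that)
  obtain x0 where x0: "x0 \<in> D" "\<Phi> x0 = z"
    using z by blast
  define u where "u lam = x0 - R lam (lam *\<^sub>R x0 - Am x0)" for lam
  show thesis
  proof (rule that)
    show "(u \<longlongrightarrow> 0) at_top"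
      unfolding u_def using R(4) bounded_linear.linear[OF R(1)] by (rule resolvent_correction_tendsto_zero)
    show "\<forall>\<^sub>F lam in at_top. u lam \<in> eigenspace D Am lam \<and> \<Phi> (u lam) = z"
      using eventually_gt_at_top[of w]
    proof eventually_elim
      case (elim lam)
      then show ?case
        using eigenvector_correction[OF closed_dd_operator_linear_on[OF Am, THEN conjunct1]
            closed_dd_operator_linear_on[OF Am, THEN conjunct2] graph_bounded_linear_on[OF \<Phi>] x0(1)]
          R(2)[OF elim, of "lam *\<^sub>R x0 - Am x0"] x0(2)
        unfolding u_def by auto
    qed
  qed
qed

theorem theoremA6:
  fixes D :: "'a::banach set" and Am :: "'a \<Rightarrow> 'a"
    and L \<Phi> \<Phi>0 :: "'a \<Rightarrow> 'b::banach" and V :: "'b \<Rightarrow> 'b"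
  assumes Am: "closed_dd_operator D Am"
    and L: "graph_bounded D Am L" "L ` D = UNIV"
    and Phi: "graph_bounded D Am \<Phi>" "\<Phi> ` D = UNIV"
    and A_gen: "generates {x \<in> D. L x = 0} Am"
    and G_gen: "generates {x \<in> D. \<Phi> x = 0} Am"
    and Phi0: "graph_bounded D Am \<Phi>0"
    and V: "bounded_linear V" "\<not> (\<exists>W. bounded_linear W \<and> V \<circ> W = id \<and> W \<circ> V = id)"
    and decomp: "\<forall>x\<in>D. \<Phi> x = \<Phi>0 x + V (L x)"
    and fin: "\<exists>S. finite S \<and> span S = (UNIV :: 'b set)"
  shows "filterlim (\<lambda>lam. norm_L_lambda D Am L lam * onorm (\<Phi>0 \<circ> dirichlet_op D Am L lam))
           at_top at_top"
proof -
  obtain S :: "'b set" where S: "finite S" "span S = UNIV"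
    using fin by blast
  obtain z0 where z0: "infdist z0 (range V) > 0"
    using noninvertible_imp_infdist_range_pos[OF S V] by blast
  obtain wA where bij: "\<And>lam. lam > wA \<Longrightarrow> bij_betw L (eigenspace D Am lam) UNIV"
    by (rule generator_boundary_bij_eigenspace[OF Am L A_gen]) (rule that)
  have "z0 \<in> \<Phi> ` D"
    using Phi(2) by simp
  then obtain u where u: "(u \<longlongrightarrow> 0) at_top"
    "\<forall>\<^sub>F lam in at_top. u lam \<in> eigenspace D Am lam \<and> \<Phi> (u lam) = z0"
    by (rule generator_vanishing_eigenvectors[OF Am Phi(1) G_gen]) (rule that)
  have "\<forall>\<^sub>F lam in at_top. infdist z0 (range V)
      \<le> norm_L_lambda D Am L lam * onorm (\<Phi>0 \<circ> dirichlet_op D Am L lam) * norm (u lam)"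
    using u(2) eventually_gt_at_top[of wA]
  proof eventually_elim
    case (elim lam)
    then have "u lam \<in> eigenspace D Am lam" "z0 = \<Phi>0 (u lam) + V (L (u lam))"
      using decomp unfolding eigenspace_def by auto
    with infdist_range_le_dirichlet_op[OF L(1) bij[OF elim(2)] _
        bounded_linear_comp_dirichlet_op[OF S Am L(1) Phi0 bij[OF elim(2)]]]
    show ?case
      by simp
  qed
  with u(1) z0 show ?thesis
    by (rule filterlim_at_top_if_bound_times_null)
qed

end
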